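(* Let $\beta>0$, $v\in\mathcal{V}$, let $\alpha_v\in\mathcal{M}_v$ be given by $\alpha_v(s)=1$ for all $s\in[0,v]$, and let $\lambda_*=-\frac{\beta^2\xi'(v_* )}{2}=-\frac{\beta^2pv_*^{p-1}}{2}$. Then: (i) if $v\neq v_*$, then $\inf_{\lambda\in\mathbb{R}}\mathcal{Q}_{\beta,v}(\alpha_v,\lambda)<0$; (ii) if $v=v_*$, then $\inf_{\lambda\in\mathbb{R}}\mathcal{Q}_{\beta,v}(\alpha_v,\lambda)=0$, and the infimum is attained at $\lambda=\lambda_*$.
   Context: Let $p\ge2$, $\mu$ a centered probability measure on a bounded Borel set $\Lambda\subset\mathbb{R}$, $v_*=\int a^2\mu(da)$, $\mathcal{V}=\{u^2:u\in\Lambda\}$, $\xi(s)=s^p$, and $\mathcal{M}_v$ the set of cumulative distribution functions on $[0,v]$. For $\alpha\in\mathcal{M}_v$, $\lambda\in\mathbb{R}$, let $\Phi_{\beta,v,\alpha}(s,x,\lambda)$ be the weak solution on $[0,v]\times\mathbb{R}$ of $\partial_s\Phi=-\frac{\beta^2\xi''(s)}{2}(\partial_{xx}\Phi+\alpha(s)(\partial_x\Phi)^2)$ with $\Phi(v,x,\lambda)=\log\int e^{xa+\lambda a^2}\mu(da)$; $\mathcal{P}_{\beta,v}(\alpha,\lambda)=\Phi_{\beta,v,\alpha}(0,0,\lambda)-\lambda v-\frac{\beta^2}{2}\int_0^v\alpha(s)\xi''(s)s\,ds$ and $\mathcal{Q}_{\beta,v}(\alpha,\lambda)=\mathcal{P}_{\beta,v}(\alpha,\lambda)-\frac{\beta^2v^p}{2}$.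 *)

theory Defs
  imports "HOL-Analysis.Analysis" "HOL-Probability.Probability"
begin

definition xi :: "nat \<Rightarrow> real \<Rightarrow> real" where
  "xi p s = s ^ p"

definition xi2 :: "nat \<Rightarrow> real \<Rightarrow> real" where
  "xi2 p s = real p * (real p - 1) * s ^ (p - 2)"

definition parisi_sol ::
  "real \<Rightarrow> nat \<Rightarrow> real \<Rightarrow> (real \<Rightarrow> real) \<Rightarrow> real measure \<Rightarrow> real
   \<Rightarrow> (real \<Rightarrow> real \<Rightarrow> real) \<Rightarrow> bool" where
  "parisi_sol \<beta> p v \<alpha> \<mu> lam F \<longleftrightarrow>
     continuous_on ({0..v} \<times> UNIV) (\<lambda>(s, x). F s x) \<and>
     (\<forall>x. F v x = ln (\<integral>a. exp (x * a + lam * a\<^sup>2) \<partial>\<mu>)) \<and>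
     (\<exists>Fs Fx Fxx B.
        \<forall>s\<in>{0<..<v}. \<forall>x.
          ((\<lambda>t. F t x) has_real_derivative Fs s x) (at s) \<and>
          (F s has_real_derivative Fx s x) (at x) \<and>
          (Fx s has_real_derivative Fxx s x) (at x) \<and>
          Fs s x = - (\<beta>\<^sup>2 * xi2 p s / 2) * (Fxx s x + \<alpha> s * (Fx s x)\<^sup>2) \<and>
          \<bar>Fx s x\<bar> \<le> B)"

(* P_{beta,v}(alpha,lambda) given Phi_{beta,v,alpha}(0,0,lambda) = phi0 *)
definition parisi_P ::
  "real \<Rightarrow> nat \<Rightarrow> real \<Rightarrow> (real \<Rightarrow> real) \<Rightarrow> real \<Rightarrow> real \<Rightarrow> real" where
  "parisi_P \<beta> p v \<alpha> lam phi0 =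
     phi0 - lam * v - \<beta>\<^sup>2 / 2 * integral {0..v} (\<lambda>s. \<alpha> s * xi2 p s * s)"

definition parisi_Q ::
  "real \<Rightarrow> nat \<Rightarrow> real \<Rightarrow> (real \<Rightarrow> real) \<Rightarrow> real \<Rightarrow> real \<Rightarrow> real" where
  "parisi_Q \<beta> p v \<alpha> lam phi0 = parisi_P \<beta> p v \<alpha> lam phi0 - \<beta>\<^sup>2 * v ^ p / 2"

end

theory Submission
  imports Defs
begin

(* For alpha = 1 the Hopf-Cole substitution u = exp Phi turns the Parisi PDE into the linear backward
   heat equation  d_s u = - (beta^2 xi''(s) / 2) d_xx u.  Differentiating  E exp (x a + c a^2)  once
   in c or twice in x brings down the same factor a^2, so with  c(s) = lam + beta^2 (xi'(v) - xi'(s)) / 2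
   the function  E exp (x a + c(s) a^2)  solves this equation with the right terminal value.  A maximum
   principle for solutions of at most exponential growth makes it the only solution, hence
   Phi(0, 0, lam) = log E exp ((lam + beta^2 xi'(v) / 2) a^2).  Since  int_0^v xi''(s) s ds = (p - 1) v^p,
   this means  Q(lam) = g(lam + beta^2 xi'(v) / 2)  with  g(c) = log E exp (c a^2) - c v.  Now g(0) = 0
   and g'(0) = v_* - v, so g takes negative values unless v = v_*, whereas for v = v_* Jensen's
   inequality gives g >= 0. *)

section \<open>Differentiation under the integral sign\<close>

lemma abs_exp_minus_one_minus_le: "\<bar>exp z - 1 - z\<bar> \<le> z\<^sup>2 * exp \<bar>z\<bar>" for z :: real
proof -
  have lower: "0 \<le> exp z - 1 - z"
    using exp_ge_add_one_self[of z] by linarith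
  have "exp z * (1 - z) \<le> exp z * exp (- z)"
    using exp_ge_add_one_self[of "- z"] by simp
  then have upper: "exp z - 1 - z \<le> z * (exp z - 1)"
    by (simp add: exp_minus algebra_simps)
  have "\<bar>exp z - 1\<bar> \<le> \<bar>z\<bar> * exp \<bar>z\<bar>"
  proof (cases "0 \<le> z")
    case True
    have "exp z * (1 - z) \<le> 1"
      using \<open>exp z * (1 - z) \<le> exp z * exp (- z)\<close> by (simp add: exp_minus)
    then show ?thesis
      using True by (simp add: algebra_simps)
  next
    case False
    have "1 - exp z \<le> - z"
      using exp_ge_add_one_self[of z] by linarith
    also have "\<dots> \<le> - z * exp (- z)"
      using False by simp
    finally show ?thesis
      using False by simp
  qed
  then have "\<bar>z\<bar> * \<bar>exp z - 1\<bar> \<le> \<bar>z\<bar> * (\<bar>z\<bar> * exp \<bar>z\<bar>)"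
    by (rule mult_left_mono) simp
  moreover have "z * (exp z - 1) \<le> \<bar>z\<bar> * \<bar>exp z - 1\<bar>"
    by (metis abs_ge_self abs_mult)
  ultimately show ?thesis
    using lower upper by (simp add: power2_eq_square)
qed

lemma has_real_derivative_of_quadratic_remainder:
  fixes f :: "real \<Rightarrow> real"
  assumes "\<And>h. \<bar>h\<bar> \<le> 1 \<Longrightarrow> \<bar>f (t + h) - f t - h * D\<bar> \<le> C * h\<^sup>2"
  shows "(f has_real_derivative D) (at t)"
  unfolding DERIV_def LIM_eq
proof (intro allI impI)
  fix r :: real
  assume r: "0 < r"
  have "\<bar>f (t + 1) - f t - 1 * D\<bar> \<le> C * 1\<^sup>2"
    by (rule assms) simp
  then have "0 \<le> C"
    by (metis abs_ge_zero mult_1_right order_trans power_one)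
  define \<delta> where "\<delta> = min 1 (r / (C + 1))"
  have "0 < \<delta>"
    using r \<open>0 \<le> C\<close> by (simp add: \<delta>_def)
  moreover have "\<bar>(f (t + h) - f t) / h - D\<bar> < r" if "h \<noteq> 0" "\<bar>h\<bar> < \<delta>" for h
  proof -
    have "\<bar>(f (t + h) - f t) / h - D\<bar> = \<bar>f (t + h) - f t - h * D\<bar> / \<bar>h\<bar>"
      using that(1) by (simp add: field_simps flip: abs_divide)
    also have "\<dots> \<le> C * h\<^sup>2 / \<bar>h\<bar>"
      using that by (intro divide_right_mono assms) (auto simp: \<delta>_def)
    also have "\<dots> = C * \<bar>h\<bar>"
      using that(1) by (simp add: power2_eq_square field_simps)
    also have "\<dots> \<le> C * (r / (C + 1))"
      using that \<open>0 \<le> C\<close> by (intro mult_left_mono) (auto simp: \<delta>_def)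
    also have "\<dots> < r"
      using r \<open>0 \<le> C\<close> by (simp add: field_simps)
    finally show ?thesis .
  qed
  ultimately show "\<exists>s>0. \<forall>h. h \<noteq> 0 \<and> norm (h - 0) < s \<longrightarrow> norm ((f (t + h) - f t) / h - D) < r"
    by auto
qed

lemma abs_exp_remainder_le:
  fixes h k t d H K :: real
  assumes h: "\<bar>h\<bar> \<le> H" and k: "\<bar>k\<bar> \<le> K" and d: "\<bar>d\<bar> \<le> 1"
  shows "\<bar>h * exp ((t + d) * k) - h * exp (t * k) - d * (h * k * exp (t * k))\<bar>
    \<le> H * K\<^sup>2 * exp (\<bar>t\<bar> * K + K) * d\<^sup>2"
proof -
  have "t * k \<le> \<bar>t\<bar> * \<bar>k\<bar>"
    by (metis abs_ge_self abs_mult)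
  also have "\<dots> \<le> \<bar>t\<bar> * K"
    using k by (intro mult_left_mono) auto
  finally have exp_tk: "exp (t * k) \<le> exp (\<bar>t\<bar> * K)"
    by simp
  have "\<bar>d\<bar> * \<bar>k\<bar> \<le> 1 * K"
    using d k by (intro mult_mono) auto
  then have dk: "\<bar>d * k\<bar> \<le> K"
    by (simp add: abs_mult)
  have dk2: "(d * k)\<^sup>2 \<le> d\<^sup>2 * K\<^sup>2"
    using k by (simp add: power_mult_distrib abs_le_square_iff[symmetric] mult_left_mono)
  have "\<bar>exp (d * k) - 1 - d * k\<bar> \<le> (d * k)\<^sup>2 * exp \<bar>d * k\<bar>"
    by (rule abs_exp_minus_one_minus_le)
  also have "\<dots> \<le> d\<^sup>2 * K\<^sup>2 * exp K"
    using dk dk2 by (intro mult_mono) auto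
  finally have "\<bar>exp (d * k) - 1 - d * k\<bar> \<le> d\<^sup>2 * K\<^sup>2 * exp K" .
  have "h * exp ((t + d) * k) - h * exp (t * k) - d * (h * k * exp (t * k))
      = h * exp (t * k) * (exp (d * k) - 1 - d * k)"
    by (simp add: algebra_simps exp_add)
  then have "\<bar>h * exp ((t + d) * k) - h * exp (t * k) - d * (h * k * exp (t * k))\<bar>
      = \<bar>h\<bar> * exp (t * k) * \<bar>exp (d * k) - 1 - d * k\<bar>"
    by (simp add: abs_mult)
  also have "\<dots> \<le> H * exp (\<bar>t\<bar> * K) * (d\<^sup>2 * K\<^sup>2 * exp K)"
    using h exp_tk \<open>\<bar>exp (d * k) - 1 - d * k\<bar> \<le> d\<^sup>2 * K\<^sup>2 * exp K\<close> by (intro mult_mono) auto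
  also have "\<dots> = H * K\<^sup>2 * exp (\<bar>t\<bar> * K + K) * d\<^sup>2"
    by (simp add: exp_add algebra_simps)
  finally show ?thesis .
qed

locale bounded_real_distribution = prob_space M for M :: "real measure" +
  fixes R :: real
  assumes sets_eq_borel: "sets M = sets borel"
    and AE_abs_le: "AE a in M. \<bar>a\<bar> \<le> R"
begin

lemma borel_measurable_continuous:
  "continuous_on UNIV f \<Longrightarrow> f \<in> borel_measurable M"
  by (subst measurable_cong_sets[OF sets_eq_borel refl]) (rule borel_measurable_continuous_onI)

lemma AE_bounded_continuous:
  fixes f :: "real \<Rightarrow> real"
  assumes "continuous_on UNIV f"
  obtains B where "AE a in M. \<bar>f a\<bar> \<le> B"
proof -
  have "compact (f ` {-R..R})"
    by (intro compact_continuous_image continuous_on_subset[OF assms]) auto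
  then obtain B where B: "\<forall>y\<in>f ` {-R..R}. \<bar>y\<bar> \<le> B"
    by (metis compact_imp_bounded bounded_iff real_norm_def)
  have "AE a in M. \<bar>f a\<bar> \<le> B"
    using AE_abs_le by eventually_elim (use B in \<open>auto simp: abs_le_iff\<close>)
  then show ?thesis ..
qed

lemma integrable_continuous:
  fixes f :: "real \<Rightarrow> real"
  assumes "continuous_on UNIV f"
  shows "integrable M f"
proof -
  obtain B where "AE a in M. \<bar>f a\<bar> \<le> B"
    using AE_bounded_continuous[OF assms] .
  then show ?thesis
    by (intro integrable_const_bound[of _ B] borel_measurable_continuous assms) simp
qed

lemma abs_integral_le:
  fixes f :: "real \<Rightarrow> real"
  assumes "continuous_on UNIV f" and "AE a in M. \<bar>f a\<bar> \<le> C"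
  shows "\<bar>\<integral>a. f a \<partial>M\<bar> \<le> C"
proof -
  have "(\<integral>a. f a \<partial>M) \<le> C" "- C \<le> (\<integral>a. f a \<partial>M)"
    using assms(2) by (auto intro!: integral_le_const integral_ge_const integrable_continuous assms(1)
        elim!: eventually_mono)
  then show ?thesis
    by linarith
qed

lemma has_real_derivative_integral_exp:
  fixes h k :: "real \<Rightarrow> real"
  assumes h: "continuous_on UNIV h" and k: "continuous_on UNIV k"
  shows "((\<lambda>t. \<integral>a. h a * exp (t * k a) \<partial>M) has_real_derivative
    (\<integral>a. h a * k a * exp (t * k a) \<partial>M)) (at t)"
proof -
  obtain H K where H: "AE a in M. \<bar>h a\<bar> \<le> H" and K: "AE a in M. \<bar>k a\<bar> \<le> K"
    by (metis AE_bounded_continuous h k)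
  show ?thesis
  proof (rule has_real_derivative_of_quadratic_remainder[where C = "H * K\<^sup>2 * exp (\<bar>t\<bar> * K + K)"])
    fix d :: real
    assume "\<bar>d\<bar> \<le> 1"
    let ?r = "\<lambda>a. h a * exp ((t + d) * k a) - h a * exp (t * k a) - d * (h a * k a * exp (t * k a))"
    have "(\<integral>a. h a * exp ((t + d) * k a) \<partial>M) - (\<integral>a. h a * exp (t * k a) \<partial>M)
        - d * (\<integral>a. h a * k a * exp (t * k a) \<partial>M) = (\<integral>a. ?r a \<partial>M)"
      by (simp add: integrable_continuous continuous_intros h k)
    also have "\<bar>\<dots>\<bar> \<le> H * K\<^sup>2 * exp (\<bar>t\<bar> * K + K) * d\<^sup>2"
      using H K \<open>\<bar>d\<bar> \<le> 1\<close>
      by (intro abs_integral_le) (auto intro!: continuous_intros h k abs_exp_remainder_le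
          elim!: eventually_elim2)
    finally show "\<bar>(\<integral>a. h a * exp ((t + d) * k a) \<partial>M) - (\<integral>a. h a * exp (t * k a) \<partial>M)
        - d * (\<integral>a. h a * k a * exp (t * k a) \<partial>M)\<bar> \<le> H * K\<^sup>2 * exp (\<bar>t\<bar> * K + K) * d\<^sup>2" .
  qed
qed

end

section \<open>Tilted moments of a bounded distribution\<close>

lemma tilt_exponent_le:
  fixes a x c R :: real
  assumes "\<bar>a\<bar> \<le> R"
  shows "x * a + c * a\<^sup>2 \<le> \<bar>x\<bar> * R + \<bar>c\<bar> * R\<^sup>2"
proof -
  have "x * a \<le> \<bar>x\<bar> * \<bar>a\<bar>"
    by (metis abs_ge_self abs_mult)
  also have "\<dots> \<le> \<bar>x\<bar> * R"
    using assms by (intro mult_left_mono) auto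
  finally have "x * a \<le> \<bar>x\<bar> * R" .
  moreover have "c * a\<^sup>2 \<le> \<bar>c\<bar> * a\<^sup>2"
    by (intro mult_right_mono) auto
  moreover have "\<bar>c\<bar> * a\<^sup>2 \<le> \<bar>c\<bar> * R\<^sup>2"
    using assms by (intro mult_left_mono) (auto simp: abs_le_square_iff[symmetric])
  ultimately show ?thesis
    by linarith
qed

(* exp Phi(v, x, lam) = tilted_moment 0 mu lam x *)

definition tilted_moment :: "nat \<Rightarrow> real measure \<Rightarrow> real \<Rightarrow> real \<Rightarrow> real" where
  "tilted_moment k M c x = (\<integral>a. a ^ k * exp (x * a + c * a\<^sup>2) \<partial>M)"

context bounded_real_distribution
begin

lemma tilted_moment_has_derivative_x:
  "((\<lambda>y. tilted_moment k M c y) has_real_derivative tilted_moment (Suc k) M c x) (at x)"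
proof -
  have "((\<lambda>y. \<integral>a. (a ^ k * exp (c * a\<^sup>2)) * exp (y * a) \<partial>M) has_real_derivative
      (\<integral>a. (a ^ k * exp (c * a\<^sup>2)) * a * exp (x * a) \<partial>M)) (at x)"
    by (rule has_real_derivative_integral_exp) (auto intro!: continuous_intros)
  then show ?thesis
    by (simp add: tilted_moment_def exp_add mult_ac)
qed

lemma tilted_moment_has_derivative_c:
  "((\<lambda>t. tilted_moment k M t x) has_real_derivative tilted_moment (k + 2) M c x) (at c)"
proof -
  have "((\<lambda>t. \<integral>a. (a ^ k * exp (x * a)) * exp (t * a\<^sup>2) \<partial>M) has_real_derivative
      (\<integral>a. (a ^ k * exp (x * a)) * a\<^sup>2 * exp (c * a\<^sup>2) \<partial>M)) (at c)"
    by (rule has_real_derivative_integral_exp) (auto intro!: continuous_intros)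
  then show ?thesis
    by (simp add: tilted_moment_def exp_add mult_ac power_add power2_eq_square)
qed

lemma tilted_moment_0_pos: "0 < tilted_moment 0 M c x"
  unfolding tilted_moment_def
  by (auto intro!: expectation_greater integrable_continuous continuous_intros)

lemma tilted_moment_0_le:
  assumes "\<bar>c\<bar> \<le> B"
  shows "tilted_moment 0 M c x \<le> exp (B * R\<^sup>2) * exp (R * \<bar>x\<bar>)"
proof -
  have "exp (x * a + c * a\<^sup>2) \<le> exp (B * R\<^sup>2) * exp (R * \<bar>x\<bar>)" if "\<bar>a\<bar> \<le> R" for a
  proof -
    have "x * a + c * a\<^sup>2 \<le> \<bar>x\<bar> * R + \<bar>c\<bar> * R\<^sup>2"
      using that by (rule tilt_exponent_le)
    also have "\<dots> \<le> B * R\<^sup>2 + R * \<bar>x\<bar>"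
      using assms by (simp add: mult_right_mono)
    finally show ?thesis
      by (simp flip: exp_add)
  qed
  then show ?thesis
    unfolding tilted_moment_def using AE_abs_le
    by (auto intro!: integral_le_const integrable_continuous continuous_intros elim!: eventually_mono)
qed

lemma continuous_on_tilted_moment:
  "continuous_on UNIV (\<lambda>z. tilted_moment k M (fst z) (snd z))"
proof (rule continuous_on_sequentiallyI)
  fix u :: "nat \<Rightarrow> real \<times> real" and z
  assume lim: "u \<longlonglongrightarrow> z"
  then obtain B where B: "\<And>n. norm (u n) \<le> B"
    by (metis BseqE convergent_imp_Bseq convergentI)
  let ?g = "\<lambda>z a. a ^ k * exp (snd z * a + fst z * a\<^sup>2)"
  have bound: "\<bar>?g (u n) a\<bar> \<le> R ^ k * exp (B * R + B * R\<^sup>2)" if a: "\<bar>a\<bar> \<le> R" for n a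
  proof -
    have "\<bar>fst (u n)\<bar> \<le> B" "\<bar>snd (u n)\<bar> \<le> B"
      using B[of n] norm_fst_le[of "fst (u n)" "snd (u n)"] norm_snd_le[of "snd (u n)" "fst (u n)"]
      by auto
    then have "\<bar>snd (u n)\<bar> * R + \<bar>fst (u n)\<bar> * R\<^sup>2 \<le> B * R + B * R\<^sup>2"
      using a by (intro add_mono mult_right_mono) auto
    then have "exp (snd (u n) * a + fst (u n) * a\<^sup>2) \<le> exp (B * R + B * R\<^sup>2)"
      using tilt_exponent_le[OF a, of "snd (u n)" "fst (u n)"] by simp
    moreover have "\<bar>a ^ k\<bar> \<le> R ^ k"
      unfolding power_abs by (rule power_mono[OF a]) simp
    ultimately show ?thesis
      by (simp add: abs_mult mult_mono)
  qed
  have "(\<lambda>n. \<integral>a. ?g (u n) a \<partial>M) \<longlonglongrightarrow> (\<integral>a. ?g z a \<partial>M)"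
  proof (rule integral_dominated_convergence[where w = "\<lambda>a. R ^ k * exp (B * R + B * R\<^sup>2)"])
    show "AE a in M. (\<lambda>n. ?g (u n) a) \<longlonglongrightarrow> ?g z a"
      using lim by (auto intro!: tendsto_intros)
    show "AE a in M. norm (?g (u n) a) \<le> R ^ k * exp (B * R + B * R\<^sup>2)" for n
      using AE_abs_le by eventually_elim (simp add: bound)
  qed (auto intro!: borel_measurable_continuous continuous_intros)
  then show "(\<lambda>n. tilted_moment k M (fst (u n)) (snd (u n))) \<longlonglongrightarrow> tilted_moment k M (fst z) (snd z)"
    by (simp add: tilted_moment_def)
qed

end

section \<open>A maximum principle for the backward heat equation\<close>

lemma deriv_nonpos_at_left_endpoint_max:
  fixes f :: "real \<Rightarrow> real"
  assumes "(f has_real_derivative D) (at s)" and "s < b" and "\<And>t. t \<in> {s..b} \<Longrightarrow> f t \<le> f s"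
  shows "D \<le> 0"
proof (rule ccontr)
  assume "\<not> D \<le> 0"
  then obtain d where "0 < d" and inc: "\<And>h. 0 < h \<Longrightarrow> h < d \<Longrightarrow> f s < f (s + h)"
    using DERIV_pos_inc_right[OF assms(1)] by force
  define h where "h = min d (b - s) / 2"
  have "0 < h" "h < d" "s + h \<le> b"
    using \<open>0 < d\<close> \<open>s < b\<close> by (auto simp: h_def min_def field_simps)
  then show False
    using inc[of h] assms(3)[of "s + h"] by auto
qed

lemma second_deriv_nonpos_at_local_max:
  fixes f f' :: "real \<Rightarrow> real"
  assumes "a < x" and "x < b" and max: "\<And>y. y \<in> {a<..<b} \<Longrightarrow> f y \<le> f x"
    and f': "\<And>y. y \<in> {a<..<b} \<Longrightarrow> (f has_real_derivative f' y) (at y)"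
    and f'': "(f' has_real_derivative D) (at x)"
  shows "D \<le> 0"
proof (rule ccontr)
  assume "\<not> D \<le> 0"
  have "f' x = 0"
  proof (rule DERIV_local_max[OF f'])
    show "0 < min (x - a) (b - x)"
      using assms(1,2) by simp
    show "\<forall>y. \<bar>x - y\<bar> < min (x - a) (b - x) \<longrightarrow> f y \<le> f x"
      using max by (auto simp: abs_less_iff)
  qed (use assms(1,2) in auto)
  obtain d where "0 < d" and inc: "\<And>h. 0 < h \<Longrightarrow> h < d \<Longrightarrow> f' x < f' (x + h)"
    using DERIV_pos_inc_right[OF f''] \<open>\<not> D \<le> 0\<close> by force
  define h where "h = min d (b - x) / 2"
  have h: "0 < h" "h < d" "x + h < b"
    using \<open>0 < d\<close> \<open>x < b\<close> by (auto simp: h_def min_def field_simps)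
  obtain z where z: "x < z" "z < x + h" "f (x + h) - f x = h * f' z"
    using MVT2[of x "x + h" f f'] h f' \<open>a < x\<close> by force
  have "0 < f' z"
    using inc[of "z - x"] z h \<open>f' x = 0\<close> by auto
  then have "f x < f (x + h)"
    using z(3) h by (simp add: algebra_simps)
  then show False
    using max[of "x + h"] h \<open>a < x\<close> by auto
qed

definition solves_backward_heat :: "real \<Rightarrow> (real \<Rightarrow> real) \<Rightarrow> (real \<Rightarrow> real \<Rightarrow> real) \<Rightarrow> bool" where
  "solves_backward_heat v D w \<longleftrightarrow>
    (\<exists>ws wx wxx. \<forall>s\<in>{0<..<v}. \<forall>x.
      ((\<lambda>t. w t x) has_real_derivative ws s x) (at s) \<and>
      (w s has_real_derivative wx s x) (at x) \<and>
      (wx s has_real_derivative wxx s x) (at x) \<and>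
      ws s x = - D s * wxx s x)"

lemma solves_backward_heatI:
  assumes "\<And>s x. s \<in> {0<..<v} \<Longrightarrow> ((\<lambda>t. w t x) has_real_derivative ws s x) (at s)"
    and "\<And>s x. s \<in> {0<..<v} \<Longrightarrow> (w s has_real_derivative wx s x) (at x)"
    and "\<And>s x. s \<in> {0<..<v} \<Longrightarrow> (wx s has_real_derivative wxx s x) (at x)"
    and "\<And>s x. s \<in> {0<..<v} \<Longrightarrow> ws s x = - D s * wxx s x"
  shows "solves_backward_heat v D w"
  unfolding solves_backward_heat_def
  by (rule exI[of _ ws], rule exI[of _ wx], rule exI[of _ wxx]) (use assms in blast)

lemma solves_backward_heat_diff:
  assumes "solves_backward_heat v D u" and "solves_backward_heat v D w"
  shows "solves_backward_heat v D (\<lambda>s x. u s x - w s x)"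
proof -
  obtain us ux uxx where u: "\<And>s x. s \<in> {0<..<v} \<Longrightarrow>
      ((\<lambda>t. u t x) has_real_derivative us s x) (at s) \<and> (u s has_real_derivative ux s x) (at x) \<and>
      (ux s has_real_derivative uxx s x) (at x) \<and> us s x = - D s * uxx s x"
    using assms(1) unfolding solves_backward_heat_def by blast
  obtain ws wx wxx where w: "\<And>s x. s \<in> {0<..<v} \<Longrightarrow>
      ((\<lambda>t. w t x) has_real_derivative ws s x) (at s) \<and> (w s has_real_derivative wx s x) (at x) \<and>
      (wx s has_real_derivative wxx s x) (at x) \<and> ws s x = - D s * wxx s x"
    using assms(2) unfolding solves_backward_heat_def by blast
  show ?thesis
  proof (rule solves_backward_heatI[where ws = "\<lambda>s x. us s x - ws s x"
        and wx = "\<lambda>s x. ux s x - wx s x" and wxx = "\<lambda>s x. uxx s x - wxx s x"])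
    fix s x
    assume "s \<in> {0<..<v}"
    note u = u[OF this, of x] and w = w[OF this, of x]
    show "((\<lambda>t. u t x - w t x) has_real_derivative us s x - ws s x) (at s)"
      using u w by (intro DERIV_diff) auto
    show "((\<lambda>x. u s x - w s x) has_real_derivative ux s x - wx s x) (at x)"
      using u w by (intro DERIV_diff) auto
    show "((\<lambda>x. ux s x - wx s x) has_real_derivative uxx s x - wxx s x) (at x)"
      using u w by (intro DERIV_diff) auto
    show "us s x - ws s x = - D s * (uxx s x - wxx s x)"
      using u w by (simp add: right_diff_distrib)
  qed
qed

definition strict_backward_heat_subsolution ::
  "real \<Rightarrow> (real \<Rightarrow> real) \<Rightarrow> (real \<Rightarrow> real \<Rightarrow> real) \<Rightarrow> bool" where
  "strict_backward_heat_subsolution v D W \<longleftrightarrow>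
    (\<exists>Ws Wx Wxx. \<forall>s\<in>{0<..<v}. \<forall>x.
      ((\<lambda>t. W t x) has_real_derivative Ws s x) (at s) \<and>
      (W s has_real_derivative Wx s x) (at x) \<and>
      (Wx s has_real_derivative Wxx s x) (at x) \<and>
      0 < Ws s x + D s * Wxx s x)"

lemma strict_backward_heat_subsolutionI:
  assumes "\<And>s x. s \<in> {0<..<v} \<Longrightarrow> ((\<lambda>t. W t x) has_real_derivative Ws s x) (at s)"
    and "\<And>s x. s \<in> {0<..<v} \<Longrightarrow> (W s has_real_derivative Wx s x) (at x)"
    and "\<And>s x. s \<in> {0<..<v} \<Longrightarrow> (Wx s has_real_derivative Wxx s x) (at x)"
    and "\<And>s x. s \<in> {0<..<v} \<Longrightarrow> 0 < Ws s x + D s * Wxx s x"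
  shows "strict_backward_heat_subsolution v D W"
  unfolding strict_backward_heat_subsolution_def
  by (rule exI[of _ Ws], rule exI[of _ Wx], rule exI[of _ Wxx]) (use assms in blast)

lemma strict_backward_heat_subsolution_no_max:
  fixes W :: "real \<Rightarrow> real \<Rightarrow> real" and D :: "real \<Rightarrow> real"
  assumes sub: "strict_backward_heat_subsolution v D W" and D: "0 \<le> D s"
    and s: "s \<in> {0<..<v}" and x: "x \<in> {-R<..<R}"
    and max: "\<And>t y. t \<in> {s..v} \<Longrightarrow> y \<in> {-R..R} \<Longrightarrow> W t y \<le> W s x"
  shows False
proof -
  obtain Ws Wx Wxx where W: "\<And>y. ((\<lambda>t. W t y) has_real_derivative Ws s y) (at s)"
      "\<And>y. (W s has_real_derivative Wx s y) (at y)" "(Wx s has_real_derivative Wxx s x) (at x)"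
      "0 < Ws s x + D s * Wxx s x"
    using sub s unfolding strict_backward_heat_subsolution_def by blast
  have "Ws s x \<le> 0"
    by (rule deriv_nonpos_at_left_endpoint_max[OF W(1), of v]) (use s x max in auto)
  moreover have "Wxx s x \<le> 0"
    by (rule second_deriv_nonpos_at_local_max[where f = "W s" and f' = "Wx s", OF _ _ _ W(2,3)])
      (use s x max in auto)
  ultimately show False
    using W(4) D by (smt (verit) mult_nonneg_nonpos)
qed

lemma strict_backward_heat_subsolution_nonpos:
  fixes W :: "real \<Rightarrow> real \<Rightarrow> real" and D :: "real \<Rightarrow> real"
  assumes sub: "strict_backward_heat_subsolution v D W"
    and D: "\<And>s. s \<in> {0<..<v} \<Longrightarrow> 0 \<le> D s"
    and cont: "continuous_on ({s0..v} \<times> {-R..R}) (\<lambda>z. W (fst z) (snd z))"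
    and top: "\<And>x. W v x \<le> 0"
    and sides: "\<And>s x. s \<in> {s0..v} \<Longrightarrow> \<bar>x\<bar> = R \<Longrightarrow> W s x \<le> 0"
    and "0 < s0" and sx: "s \<in> {s0..v}" "x \<in> {-R..R}"
  shows "W s x \<le> 0"
proof -
  let ?T = "{s0..v} \<times> {-R..R}"
  obtain z where "z \<in> ?T" and zmax: "\<forall>y\<in>?T. W (fst y) (snd y) \<le> W (fst z) (snd z)"
    using continuous_attains_sup[OF compact_Times[OF compact_Icc compact_Icc] _ cont] sx by blast
  obtain s1 x1 where z: "z = (s1, x1)"
    by (cases z)
  have s1: "s1 \<in> {s0..v}" and x1: "x1 \<in> {-R..R}"
    using \<open>z \<in> ?T\<close> z by auto
  have max: "W t y \<le> W s1 x1" if "t \<in> {s0..v}" "y \<in> {-R..R}" for t y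
    using zmax that z by force
  have "W s1 x1 \<le> 0"
  proof (rule ccontr)
    assume pos: "\<not> W s1 x1 \<le> 0"
    have "s1 \<noteq> v" "\<bar>x1\<bar> \<noteq> R"
      using pos top[of x1] sides[OF s1, of x1] by auto
    then have s1': "s1 \<in> {0<..<v}" and x1': "x1 \<in> {-R<..<R}"
      using s1 x1 \<open>0 < s0\<close> by (auto simp: abs_if split: if_splits)
    show False
      by (rule strict_backward_heat_subsolution_no_max[OF sub D[OF s1'] s1' x1']) (use s1 max in auto)
  qed
  then show ?thesis
    using max[OF sx] by simp
qed

(* For A > D k^2 the barrier satisfies  d_s psi + D d_xx psi = (D k^2 - A) psi < 0,  and it dominates
   exp (k |x|). *)

definition heat_barrier :: "real \<Rightarrow> real \<Rightarrow> real \<Rightarrow> real \<Rightarrow> real \<Rightarrow> real" where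
  "heat_barrier A k v s x = exp (A * (v - s)) * (exp (k * x) + exp (- (k * x)))"

lemma heat_barrier_pos: "0 < heat_barrier A k v s x"
  by (simp add: heat_barrier_def add_pos_pos)

lemma exp_le_heat_barrier:
  assumes "0 \<le> A" and "s \<le> v"
  shows "exp (k * \<bar>x\<bar>) \<le> heat_barrier A k v s x"
proof -
  have "exp (k * \<bar>x\<bar>) \<le> exp (k * x) + exp (- (k * x))"
    by (cases "0 \<le> x") (auto simp: add_increasing add_increasing2)
  also have "\<dots> \<le> exp (A * (v - s)) * (exp (k * x) + exp (- (k * x)))"
  proof -
    have "1 \<le> exp (A * (v - s))"
      using assms by simp
    then show ?thesis
      by (simp add: add_pos_pos)
  qed
  finally show ?thesis
    by (simp add: heat_barrier_def)
qed

lemma heat_barrier_derivatives: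
  "((\<lambda>t. heat_barrier A k v t x) has_real_derivative - A * heat_barrier A k v s x) (at s)"
  "(heat_barrier A k v s has_real_derivative
    exp (A * (v - s)) * (k * exp (k * x) - k * exp (- (k * x)))) (at x)"
  "((\<lambda>y. exp (A * (v - s)) * (k * exp (k * y) - k * exp (- (k * y)))) has_real_derivative
    k\<^sup>2 * heat_barrier A k v s x) (at x)"
  unfolding heat_barrier_def
  by (rule derivative_eq_intros refl | simp add: algebra_simps power2_eq_square)+

lemma strict_subsolution_minus_heat_barrier:
  fixes w :: "real \<Rightarrow> real \<Rightarrow> real" and D :: "real \<Rightarrow> real"
  assumes sol: "solves_backward_heat v D w" and D: "\<And>s. s \<in> {0<..<v} \<Longrightarrow> D s \<le> Dm"
    and \<epsilon>: "0 < \<epsilon>"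
  shows "strict_backward_heat_subsolution v D
    (\<lambda>s x. w s x - \<epsilon> * heat_barrier (\<bar>Dm\<bar> * k\<^sup>2 + 1) k v s x)"
proof -
  define A where "A = \<bar>Dm\<bar> * k\<^sup>2 + 1"
  define \<psi> where "\<psi> = heat_barrier A k v"
  obtain ws wx wxx where w: "\<And>s x. s \<in> {0<..<v} \<Longrightarrow>
      ((\<lambda>t. w t x) has_real_derivative ws s x) (at s) \<and> (w s has_real_derivative wx s x) (at x) \<and>
      (wx s has_real_derivative wxx s x) (at x) \<and> ws s x = - D s * wxx s x"
    using sol unfolding solves_backward_heat_def by blast
  note \<psi> = heat_barrier_derivatives[where A = A and k = k and v = v, folded \<psi>_def]
  show ?thesis
    unfolding A_def[symmetric] \<psi>_def[symmetric]
  proof (rule strict_backward_heat_subsolutionI[where Ws = "\<lambda>s x. ws s x + \<epsilon> * (A * \<psi> s x)"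
        and Wx = "\<lambda>s x. wx s x - \<epsilon> * (exp (A * (v - s)) * (k * exp (k * x) - k * exp (- (k * x))))"
        and Wxx = "\<lambda>s x. wxx s x - \<epsilon> * (k\<^sup>2 * \<psi> s x)"])
    fix s x
    assume s: "s \<in> {0<..<v}"
    note w = w[OF s, of x]
    show "((\<lambda>t. w t x - \<epsilon> * \<psi> t x) has_real_derivative ws s x + \<epsilon> * (A * \<psi> s x)) (at s)"
      using DERIV_diff[OF conjunct1[OF w] DERIV_cmult[OF \<psi>(1)]] by simp
    show "((\<lambda>x. w s x - \<epsilon> * \<psi> s x) has_real_derivative
        wx s x - \<epsilon> * (exp (A * (v - s)) * (k * exp (k * x) - k * exp (- (k * x))))) (at x)"
      using w by (intro DERIV_diff DERIV_cmult \<psi>(2)) auto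
    show "((\<lambda>x. wx s x - \<epsilon> * (exp (A * (v - s)) * (k * exp (k * x) - k * exp (- (k * x)))))
        has_real_derivative wxx s x - \<epsilon> * (k\<^sup>2 * \<psi> s x)) (at x)"
      using w by (intro DERIV_diff DERIV_cmult \<psi>(3)) auto
    have "D s * k\<^sup>2 \<le> \<bar>Dm\<bar> * k\<^sup>2"
      using D[OF s] by (intro mult_right_mono) auto
    then have "0 < \<epsilon> * \<psi> s x * (A - D s * k\<^sup>2)"
      using \<epsilon> heat_barrier_pos[of A k v s x] by (simp add: A_def \<psi>_def)
    then show "0 < ws s x + \<epsilon> * (A * \<psi> s x) + D s * (wxx s x - \<epsilon> * (k\<^sup>2 * \<psi> s x))"
      using w by (simp add: algebra_simps)
  qed
qed

lemma exp_growth_less: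
  fixes C K r \<epsilon> :: real
  assumes "0 < \<epsilon>" and "\<bar>C\<bar> / \<epsilon> < r"
  shows "C * exp (K * r) < \<epsilon> * exp ((\<bar>K\<bar> + 1) * r)"
proof -
  have "0 \<le> r"
    using assms by (smt (verit) divide_nonneg_pos)
  have "\<bar>C\<bar> < \<epsilon> * r"
    using assms by (simp add: field_simps)
  also have "\<dots> < \<epsilon> * exp r"
    using assms(1) by (simp add: less_le_trans[OF _ exp_ge_add_one_self])
  finally have "\<bar>C\<bar> < \<epsilon> * exp r" .
  have "C * exp (K * r) \<le> \<bar>C\<bar> * exp (\<bar>K\<bar> * r)"
    using \<open>0 \<le> r\<close> by (intro mult_mono) (auto intro: mult_right_mono)
  also have "\<dots> < \<epsilon> * exp r * exp (\<bar>K\<bar> * r)"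
    using \<open>\<bar>C\<bar> < \<epsilon> * exp r\<close> by simp
  also have "\<dots> = \<epsilon> * exp ((\<bar>K\<bar> + 1) * r)"
    by (simp add: algebra_simps flip: exp_add)
  finally show ?thesis .
qed

lemma backward_heat_le_barrier:
  fixes w :: "real \<Rightarrow> real \<Rightarrow> real" and D :: "real \<Rightarrow> real"
  assumes cont: "continuous_on ({0..v} \<times> UNIV) (\<lambda>z. w (fst z) (snd z))"
    and sol: "solves_backward_heat v D w"
    and D: "\<And>s. s \<in> {0<..<v} \<Longrightarrow> 0 \<le> D s" "\<And>s. s \<in> {0<..<v} \<Longrightarrow> D s \<le> Dm"
    and top: "\<And>x. w v x \<le> 0"
    and growth: "\<And>s x. s \<in> {0<..<v} \<Longrightarrow> w s x \<le> C * exp (K * \<bar>x\<bar>)"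
    and s': "s' \<in> {0<..v}" and \<epsilon>: "0 < \<epsilon>"
  shows "w s' x' \<le> \<epsilon> * heat_barrier (\<bar>Dm\<bar> * (\<bar>K\<bar> + 1)\<^sup>2 + 1) (\<bar>K\<bar> + 1) v s' x'"
proof -
  define k where "k = \<bar>K\<bar> + 1"
  define \<psi> where "\<psi> = heat_barrier (\<bar>Dm\<bar> * k\<^sup>2 + 1) k v"
  define R where "R = \<bar>x'\<bar> + 1 + \<bar>C\<bar> / \<epsilon>"
  have "\<bar>x'\<bar> \<le> R"
    using \<epsilon> by (simp add: R_def)
  have top': "w v x - \<epsilon> * \<psi> v x \<le> 0" for x
    using top[of x] mult_pos_pos[OF \<epsilon> heat_barrier_pos[of "\<bar>Dm\<bar> * k\<^sup>2 + 1" k v v x]]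
    by (simp add: \<psi>_def)
  have sides: "w s x - \<epsilon> * \<psi> s x \<le> 0" if "s \<in> {s'..v}" "\<bar>x\<bar> = R" for s x
  proof (cases "s = v")
    case False
    then have "w s x \<le> C * exp (K * R)"
      using growth[of s x] that s' by auto
    also have "\<dots> < \<epsilon> * exp (k * \<bar>x\<bar>)"
      using exp_growth_less[OF \<epsilon>, of C R K] \<open>\<bar>x\<bar> = R\<close> \<epsilon> by (simp add: R_def k_def)
    also have "\<dots> \<le> \<epsilon> * \<psi> s x"
      unfolding \<psi>_def using that \<epsilon> by (intro mult_left_mono exp_le_heat_barrier) auto
    finally show ?thesis
      by simp
  qed (use top' in simp)
  have "w s' x' - \<epsilon> * \<psi> s' x' \<le> 0"
  proof (rule strict_backward_heat_subsolution_nonpos[where W = "\<lambda>s x. w s x - \<epsilon> * \<psi> s x" and R = R])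
    show "strict_backward_heat_subsolution v D (\<lambda>s x. w s x - \<epsilon> * \<psi> s x)"
      unfolding \<psi>_def using sol D(2) \<epsilon> by (rule strict_subsolution_minus_heat_barrier)
    show "continuous_on ({s'..v} \<times> {-R..R}) (\<lambda>z. w (fst z) (snd z) - \<epsilon> * \<psi> (fst z) (snd z))"
      using s' unfolding \<psi>_def heat_barrier_def
      by (intro continuous_intros continuous_on_subset[OF cont]) auto
  qed (use D(1) top' sides s' \<open>\<bar>x'\<bar> \<le> R\<close> in \<open>auto simp: abs_le_iff\<close>)
  then show ?thesis
    by (simp add: \<psi>_def k_def)
qed

lemma nonpos_at_left_endpoint:
  fixes f :: "real \<Rightarrow> real"
  assumes "continuous_on {a..b} f" and "a < b" and "\<And>s. s \<in> {a<..<b} \<Longrightarrow> f s \<le> 0"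
  shows "f a \<le> 0"
proof -
  have "closed ({a..b} \<inter> f -` {..0})"
    using assms(1) by (intro continuous_closed_preimage) auto
  moreover have "{a<..<b} \<subseteq> {a..b} \<inter> f -` {..0}"
    using assms(3) by auto
  ultimately have "closure {a<..<b} \<subseteq> {a..b} \<inter> f -` {..0}"
    by (rule closure_minimal[rotated])
  then show ?thesis
    using assms(2) by (simp add: subset_eq)
qed

lemma backward_heat_max_principle:
  fixes w :: "real \<Rightarrow> real \<Rightarrow> real" and D :: "real \<Rightarrow> real"
  assumes cont: "continuous_on ({0..v} \<times> UNIV) (\<lambda>z. w (fst z) (snd z))"
    and sol: "solves_backward_heat v D w"
    and D: "\<And>s. s \<in> {0<..<v} \<Longrightarrow> 0 \<le> D s" "\<And>s. s \<in> {0<..<v} \<Longrightarrow> D s \<le> Dm"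
    and top: "\<And>x. w v x \<le> 0"
    and growth: "\<And>s x. s \<in> {0<..<v} \<Longrightarrow> w s x \<le> C * exp (K * \<bar>x\<bar>)"
    and s': "s' \<in> {0..v}"
  shows "w s' x' \<le> 0"
proof -
  have interior: "w s x' \<le> 0" if s: "s \<in> {0<..v}" for s
  proof (rule ccontr)
    let ?P = "heat_barrier (\<bar>Dm\<bar> * (\<bar>K\<bar> + 1)\<^sup>2 + 1) (\<bar>K\<bar> + 1) v s x'"
    have "0 < ?P"
      by (rule heat_barrier_pos)
    assume "\<not> w s x' \<le> 0"
    then have "0 < w s x' / (2 * ?P)"
      using \<open>0 < ?P\<close> by simp
    from backward_heat_le_barrier[OF assms(1-6) s this, where x' = x']
    have "w s x' \<le> w s x' / 2"
      using \<open>0 < ?P\<close> by simp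
    then show False
      using \<open>\<not> w s x' \<le> 0\<close> by simp
  qed
  show ?thesis
  proof (cases "s' = 0 \<and> 0 < v")
    case True
    have "continuous_on {0..v} (\<lambda>s. w s x')"
      by (rule continuous_on_compose2[OF cont, of _ "\<lambda>s. (s, x')", simplified])
        (auto intro!: continuous_intros)
    then show ?thesis
      using True interior by (auto intro: nonpos_at_left_endpoint)
  next
    case False
    then show ?thesis
      using s' interior top[of x'] by (cases "s' = v") auto
  qed
qed

lemma backward_heat_comparison:
  fixes u w :: "real \<Rightarrow> real \<Rightarrow> real" and D :: "real \<Rightarrow> real"
  assumes cont: "continuous_on ({0..v} \<times> UNIV) (\<lambda>z. u (fst z) (snd z))"
      "continuous_on ({0..v} \<times> UNIV) (\<lambda>z. w (fst z) (snd z))"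
    and sol: "solves_backward_heat v D u" "solves_backward_heat v D w"
    and D: "\<And>s. s \<in> {0<..<v} \<Longrightarrow> 0 \<le> D s" "\<And>s. s \<in> {0<..<v} \<Longrightarrow> D s \<le> Dm"
    and top: "\<And>x. u v x \<le> w v x"
    and growth: "\<And>s x. s \<in> {0<..<v} \<Longrightarrow> u s x \<le> C * exp (K * \<bar>x\<bar>)"
    and nonneg: "\<And>s x. s \<in> {0<..<v} \<Longrightarrow> 0 \<le> w s x"
    and s': "s' \<in> {0..v}"
  shows "u s' x' \<le> w s' x'"
proof -
  have "u s' x' - w s' x' \<le> 0"
  proof (rule backward_heat_max_principle[where w = "\<lambda>s x. u s x - w s x", OF _ _ D _ _ s'])
    show "continuous_on ({0..v} \<times> UNIV) (\<lambda>z. u (fst z) (snd z) - w (fst z) (snd z))"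
      by (intro continuous_on_diff cont)
    show "solves_backward_heat v D (\<lambda>s x. u s x - w s x)"
      by (intro solves_backward_heat_diff sol)
    show "u v x - w v x \<le> 0" for x
      using top[of x] by simp
    show "u s x - w s x \<le> C * exp (K * \<bar>x\<bar>)" if "s \<in> {0<..<v}" for s x
      using growth[OF that, of x] nonneg[OF that, of x] by linarith
  qed
  then show ?thesis
    by simp
qed

lemma backward_heat_unique:
  fixes u w :: "real \<Rightarrow> real \<Rightarrow> real" and D :: "real \<Rightarrow> real"
  assumes cont: "continuous_on ({0..v} \<times> UNIV) (\<lambda>z. u (fst z) (snd z))"
      "continuous_on ({0..v} \<times> UNIV) (\<lambda>z. w (fst z) (snd z))"
    and sol: "solves_backward_heat v D u" "solves_backward_heat v D w"
    and D: "\<And>s. s \<in> {0<..<v} \<Longrightarrow> 0 \<le> D s" "\<And>s. s \<in> {0<..<v} \<Longrightarrow> D s \<le> Dm"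
    and top: "\<And>x. u v x = w v x"
    and nonneg: "\<And>s x. s \<in> {0<..<v} \<Longrightarrow> 0 \<le> u s x" "\<And>s x. s \<in> {0<..<v} \<Longrightarrow> 0 \<le> w s x"
    and growth: "\<And>s x. s \<in> {0<..<v} \<Longrightarrow> u s x \<le> Cu * exp (Ku * \<bar>x\<bar>)"
      "\<And>s x. s \<in> {0<..<v} \<Longrightarrow> w s x \<le> Cw * exp (Kw * \<bar>x\<bar>)"
    and s': "s' \<in> {0..v}"
  shows "u s' x' = w s' x'"
  using backward_heat_comparison[OF cont sol D _ growth(1) nonneg(2) s']
    backward_heat_comparison[OF cont(2,1) sol(2,1) D _ growth(2) nonneg(1) s'] top
  by (simp add: order_antisym)

section \<open>The Parisi functional for a constant order parameter\<close>

lemma has_real_derivative_xi1: "((\<lambda>s. real p * s ^ (p - 1)) has_real_derivative xi2 p s) (at s)"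
proof (cases "p = 0")
  case False
  have "((\<lambda>s. real p * s ^ (p - 1)) has_real_derivative real p * (real (p - 1) * s ^ (p - 1 - 1))) (at s)"
    by (rule derivative_eq_intros refl | simp)+
  then show ?thesis
    using False by (simp add: xi2_def of_nat_diff numeral_2_eq_2 mult.assoc)
qed (simp add: xi2_def)

lemma xi2_nonneg: "0 \<le> s \<Longrightarrow> 0 \<le> xi2 p s"
  by (cases p) (simp_all add: xi2_def)

lemma xi2_mono: "0 \<le> s \<Longrightarrow> s \<le> t \<Longrightarrow> xi2 p s \<le> xi2 p t"
  unfolding xi2_def by (cases p) (auto intro!: mult_left_mono power_mono)

lemma integral_xi2_mult:
  assumes "1 \<le> p" and "0 \<le> v"
  shows "integral {0..v} (\<lambda>s. xi2 p s * s) = (real p - 1) * v ^ p"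
proof -
  have "((\<lambda>s. xi2 p s * s) has_integral (real p - 1) * v ^ p - (real p - 1) * 0 ^ p) {0..v}"
  proof (rule fundamental_theorem_of_calculus[OF assms(2)])
    fix s
    have "((\<lambda>s. (real p - 1) * s ^ p) has_real_derivative (real p - 1) * (real p * s ^ (p - 1))) (at s)"
      by (rule derivative_eq_intros refl | simp)+
    moreover have "(real p - 1) * (real p * s ^ (p - 1)) = xi2 p s * s"
    proof (cases "p = 1")
      case False
      then have "s ^ (p - 1) = s ^ (p - 2) * s"
        using assms(1) by (simp add: power_Suc2[symmetric] numeral_2_eq_2 Suc_diff_Suc)
      then show ?thesis
        by (simp add: xi2_def)
    qed (simp add: xi2_def)
    ultimately show "((\<lambda>s. (real p - 1) * s ^ p) has_vector_derivative xi2 p s * s) (at s within {0..v})"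
      by (simp add: has_real_derivative_iff_has_vector_derivative[symmetric] has_field_derivative_at_within)
  qed
  then show ?thesis
    using assms(1) by (simp add: integral_unique)
qed

lemma parisi_sol_exp_solves_backward_heat:
  assumes "parisi_sol \<beta> p v (\<lambda>s. 1) M lam F"
  shows "solves_backward_heat v (\<lambda>s. \<beta>\<^sup>2 * xi2 p s / 2) (\<lambda>s x. exp (F s x))"
proof -
  obtain Fs Fx Fxx B where F: "\<And>s x. s \<in> {0<..<v} \<Longrightarrow>
      ((\<lambda>t. F t x) has_real_derivative Fs s x) (at s) \<and> (F s has_real_derivative Fx s x) (at x) \<and>
      (Fx s has_real_derivative Fxx s x) (at x) \<and>
      Fs s x = - (\<beta>\<^sup>2 * xi2 p s / 2) * (Fxx s x + 1 * (Fx s x)\<^sup>2) \<and> \<bar>Fx s x\<bar> \<le> B"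
    using assms unfolding parisi_sol_def by blast
  show ?thesis
  proof (rule solves_backward_heatI[where ws = "\<lambda>s x. exp (F s x) * Fs s x"
        and wx = "\<lambda>s x. exp (F s x) * Fx s x" and wxx = "\<lambda>s x. exp (F s x) * (Fx s x * Fx s x + Fxx s x)"])
    fix s x
    assume "s \<in> {0<..<v}"
    note F = F[OF this, of x]
    show "((\<lambda>t. exp (F t x)) has_real_derivative exp (F s x) * Fs s x) (at s)"
      by (rule DERIV_fun_exp) (use F in blast)
    show "((\<lambda>x. exp (F s x)) has_real_derivative exp (F s x) * Fx s x) (at x)"
      by (rule DERIV_fun_exp) (use F in blast)
    have "((\<lambda>x. exp (F s x) * Fx s x) has_real_derivative
        exp (F s x) * Fx s x * Fx s x + Fxx s x * exp (F s x)) (at x)"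
      by (intro DERIV_mult DERIV_fun_exp) (use F in blast)+
    then show "((\<lambda>x. exp (F s x) * Fx s x) has_real_derivative
        exp (F s x) * (Fx s x * Fx s x + Fxx s x)) (at x)"
      by (simp add: algebra_simps)
    show "exp (F s x) * Fs s x = - (\<beta>\<^sup>2 * xi2 p s / 2) * (exp (F s x) * (Fx s x * Fx s x + Fxx s x))"
      using F by (simp add: algebra_simps power2_eq_square)
  qed
qed

lemma parisi_sol_exp_growth:
  assumes "parisi_sol \<beta> p v \<alpha> M lam F" and "0 \<le> v"
  obtains C K where "\<And>s x. s \<in> {0<..<v} \<Longrightarrow> exp (F s x) \<le> C * exp (K * \<bar>x\<bar>)"
proof -
  have cont: "continuous_on ({0..v} \<times> UNIV) (\<lambda>(s, x). F s x)"
    using assms(1) unfolding parisi_sol_def by blast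
  obtain Fs Fx Fxx B where F: "\<And>s x. s \<in> {0<..<v} \<Longrightarrow>
      (F s has_real_derivative Fx s x) (at x) \<and> \<bar>Fx s x\<bar> \<le> B"
    using assms(1) unfolding parisi_sol_def by blast
  have "continuous_on {0..v} (\<lambda>s. F s 0)"
    by (rule continuous_on_compose2[OF cont, of _ "\<lambda>s. (s, 0)", simplified])
      (auto intro!: continuous_intros)
  then obtain Fmax where Fmax: "\<And>s. s \<in> {0..v} \<Longrightarrow> F s 0 \<le> Fmax"
    using continuous_attains_sup[of "{0..v}" "\<lambda>s. F s 0"] assms(2) by fastforce
  have "exp (F s x) \<le> exp Fmax * exp (B * \<bar>x\<bar>)" if s: "s \<in> {0<..<v}" for s x
  proof -
    have "\<bar>F s x - F s 0\<bar> \<le> B * \<bar>x - 0\<bar>"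
      using field_differentiable_bound[of UNIV "F s" "Fx s" B x 0] F[OF s] by auto
    then have "F s x \<le> Fmax + B * \<bar>x\<bar>"
      using Fmax[of s] s by auto
    then show ?thesis
      by (simp flip: exp_add)
  qed
  then show ?thesis
    using that by blast
qed

lemma exists_less_of_nonzero_derivative:
  fixes f :: "real \<Rightarrow> real"
  assumes "(f has_real_derivative l) (at x)" and "l \<noteq> 0"
  shows "\<exists>y. f y < f x"
proof (rule ccontr)
  assume "\<nexists>y. f y < f x"
  then have "l = 0"
    by (intro DERIV_local_min[OF assms(1), of 1]) (auto simp: not_less)
  with assms(2) show False ..
qed

context bounded_real_distribution
begin

lemma solves_backward_heat_tilted_moment:
  assumes "\<And>s. s \<in> {0<..<v} \<Longrightarrow> (c has_real_derivative - D s) (at s)"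
  shows "solves_backward_heat v D (\<lambda>s x. tilted_moment 0 M (c s) x)"
proof (rule solves_backward_heatI[where ws = "\<lambda>s x. tilted_moment 2 M (c s) x * - D s"
      and wx = "\<lambda>s x. tilted_moment 1 M (c s) x" and wxx = "\<lambda>s x. tilted_moment 2 M (c s) x"])
  fix s x
  assume "s \<in> {0<..<v}"
  show "((\<lambda>t. tilted_moment 0 M (c t) x) has_real_derivative tilted_moment 2 M (c s) x * - D s) (at s)"
    using DERIV_chain2[OF tilted_moment_has_derivative_c assms[OF \<open>s \<in> {0<..<v}\<close>], of 0 x]
    by (simp add: numeral_2_eq_2)
  show "((\<lambda>x. tilted_moment 0 M (c s) x) has_real_derivative tilted_moment 1 M (c s) x) (at x)"
    using tilted_moment_has_derivative_x[of 0] by simp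
  show "((\<lambda>x. tilted_moment 1 M (c s) x) has_real_derivative tilted_moment 2 M (c s) x) (at x)"
    using tilted_moment_has_derivative_x[of 1] by (simp add: numeral_2_eq_2)
qed simp

lemma tilted_moment_exp_growth:
  fixes c :: "real \<Rightarrow> real"
  assumes "continuous_on {0..v} c"
  obtains C K where "\<And>s x. s \<in> {0..v} \<Longrightarrow> tilted_moment 0 M (c s) x \<le> C * exp (K * \<bar>x\<bar>)"
proof -
  have "compact (c ` {0..v})"
    by (intro compact_continuous_image assms compact_Icc)
  then obtain B where "\<And>s. s \<in> {0..v} \<Longrightarrow> \<bar>c s\<bar> \<le> B"
    by (metis compact_imp_bounded bounded_iff image_eqI real_norm_def)
  then show ?thesis
    using that[of "exp (B * R\<^sup>2)" R] by (auto intro: tilted_moment_0_le)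
qed

lemma parisi_sol_value_at_origin:
  assumes p: "2 \<le> p" and v: "0 \<le> v" and sol: "parisi_sol \<beta> p v (\<lambda>s. 1) M lam F"
  shows "F 0 0 = ln (tilted_moment 0 M (lam + \<beta>\<^sup>2 * real p * v ^ (p - 1) / 2) 0)"
proof -
  define c where "c s = lam + \<beta>\<^sup>2 / 2 * (real p * v ^ (p - 1) - real p * s ^ (p - 1))" for s
  have "(c has_real_derivative 0 + \<beta>\<^sup>2 / 2 * (0 - xi2 p s)) (at s)" for s
    unfolding c_def by (intro DERIV_add DERIV_cmult DERIV_diff DERIV_const has_real_derivative_xi1)
  then have dc: "(c has_real_derivative - (\<beta>\<^sup>2 * xi2 p s / 2)) (at s)" for s
    by simp
  have "continuous_on UNIV c"
    unfolding c_def by (intro continuous_intros)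
  then obtain C' K' where growth': "\<And>s x. s \<in> {0..v} \<Longrightarrow> tilted_moment 0 M (c s) x \<le> C' * exp (K' * \<bar>x\<bar>)"
    using tilted_moment_exp_growth[OF continuous_on_subset[OF _ subset_UNIV]] by blast
  obtain C K where growth: "\<And>s x. s \<in> {0<..<v} \<Longrightarrow> exp (F s x) \<le> C * exp (K * \<bar>x\<bar>)"
    using parisi_sol_exp_growth[OF sol v] by blast
  have F_cont: "continuous_on ({0..v} \<times> UNIV) (\<lambda>z. F (fst z) (snd z))"
    using sol unfolding parisi_sol_def case_prod_unfold by blast
  have F_top: "F v x = ln (tilted_moment 0 M lam x)" for x
    using sol unfolding parisi_sol_def tilted_moment_def by simp
  have "exp (F 0 0) = tilted_moment 0 M (c 0) 0"
  proof (rule backward_heat_unique[where u = "\<lambda>s x. exp (F s x)" and w = "\<lambda>s x. tilted_moment 0 M (c s) x"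
        and D = "\<lambda>s. \<beta>\<^sup>2 * xi2 p s / 2" and Dm = "\<beta>\<^sup>2 * xi2 p v / 2"
        and Cu = C and Ku = K and Cw = C' and Kw = K'])
    show "continuous_on ({0..v} \<times> UNIV) (\<lambda>z. exp (F (fst z) (snd z)))"
      by (rule continuous_on_exp[OF F_cont])
    have "continuous_on ({0..v} \<times> UNIV) (\<lambda>z. (c (fst z), snd z))"
      by (intro continuous_intros continuous_on_compose2[OF \<open>continuous_on UNIV c\<close>]) auto
    then show "continuous_on ({0..v} \<times> UNIV) (\<lambda>z. tilted_moment 0 M (c (fst z)) (snd z))"
      using continuous_on_compose2[OF continuous_on_tilted_moment] by fastforce
    show "solves_backward_heat v (\<lambda>s. \<beta>\<^sup>2 * xi2 p s / 2) (\<lambda>s x. exp (F s x))"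
      by (rule parisi_sol_exp_solves_backward_heat[OF sol])
    show "solves_backward_heat v (\<lambda>s. \<beta>\<^sup>2 * xi2 p s / 2) (\<lambda>s x. tilted_moment 0 M (c s) x)"
      by (rule solves_backward_heat_tilted_moment[OF dc])
    show "exp (F v x) = tilted_moment 0 M (c v) x" for x
      using tilted_moment_0_pos[of lam x] by (simp add: F_top c_def)
    show "0 \<le> \<beta>\<^sup>2 * xi2 p s / 2" if "s \<in> {0<..<v}" for s
      using that xi2_nonneg[of s p] by simp
    show "\<beta>\<^sup>2 * xi2 p s / 2 \<le> \<beta>\<^sup>2 * xi2 p v / 2" if "s \<in> {0<..<v}" for s
      using that by (intro divide_right_mono mult_left_mono xi2_mono) auto
    show "0 \<le> tilted_moment 0 M (c s) x" for s x
      using tilted_moment_0_pos[of "c s" x] by simp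
    show "tilted_moment 0 M (c s) x \<le> C' * exp (K' * \<bar>x\<bar>)" if "s \<in> {0<..<v}" for s x
      using growth' that by simp
  qed (use growth v in auto)
  moreover have "c 0 = lam + \<beta>\<^sup>2 * real p * v ^ (p - 1) / 2"
    using p by (simp add: c_def)
  ultimately show ?thesis
    by (metis ln_exp)
qed

lemma parisi_Q_alpha_one_eq:
  assumes p: "2 \<le> p" and v: "0 \<le> v" and sol: "parisi_sol \<beta> p v (\<lambda>s. 1) M lam F"
  shows "parisi_Q \<beta> p v (\<lambda>s. 1) lam (F 0 0) =
    ln (tilted_moment 0 M (lam + \<beta>\<^sup>2 * real p * v ^ (p - 1) / 2) 0) - (lam + \<beta>\<^sup>2 * real p * v ^ (p - 1) / 2) * v"
proof -
  have "v ^ p = v ^ Suc (p - 1)"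
    using p by simp
  then have "v ^ (p - 1) * v = v ^ p"
    by (simp only: power_Suc2)
  have "parisi_Q \<beta> p v (\<lambda>s. 1) lam (F 0 0) = ln (tilted_moment 0 M (lam + \<beta>\<^sup>2 * real p * v ^ (p - 1) / 2) 0)
      - lam * v - \<beta>\<^sup>2 / 2 * ((real p - 1) * v ^ p) - \<beta>\<^sup>2 * v ^ p / 2"
    using integral_xi2_mult[of p v] p v
    by (simp add: parisi_Q_def parisi_P_def parisi_sol_value_at_origin[OF p v sol])
  also have "\<dots> = ln (tilted_moment 0 M (lam + \<beta>\<^sup>2 * real p * v ^ (p - 1) / 2) 0)
      - (lam + \<beta>\<^sup>2 * real p * v ^ (p - 1) / 2) * v"
    by (simp add: algebra_simps flip: \<open>v ^ (p - 1) * v = v ^ p\<close>)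
  finally show ?thesis .
qed

lemma tilted_moment_0_origin: "tilted_moment 0 M 0 0 = 1"
  by (simp add: tilted_moment_def prob_space)

lemma mult_second_moment_le_ln_tilted_moment: "c * expectation (\<lambda>a. a\<^sup>2) \<le> ln (tilted_moment 0 M c 0)"
proof -
  have "exp (expectation (\<lambda>a. c * a\<^sup>2)) \<le> expectation (\<lambda>a. exp (c * a\<^sup>2))"
    by (rule jensens_inequality[where I = UNIV])
      (auto intro!: integrable_continuous continuous_intros exp_convex)
  then show ?thesis
    using tilted_moment_0_pos[of c 0] by (simp add: tilted_moment_def ln_ge_iff)
qed

lemma ln_tilted_moment_less_linear:
  assumes "v \<noteq> expectation (\<lambda>a. a\<^sup>2)"
  obtains c where "ln (tilted_moment 0 M c 0) - c * v < 0"
proof -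
  have "((\<lambda>c. ln (tilted_moment 0 M c 0)) has_real_derivative
      1 / tilted_moment 0 M 0 0 * tilted_moment (0 + 2) M 0 0) (at 0)"
    by (rule DERIV_chain2[OF DERIV_ln_divide[OF tilted_moment_0_pos] tilted_moment_has_derivative_c])
  moreover have "tilted_moment 2 M 0 0 = expectation (\<lambda>a. a\<^sup>2)"
    by (simp add: tilted_moment_def)
  ultimately have "((\<lambda>c. ln (tilted_moment 0 M c 0)) has_real_derivative expectation (\<lambda>a. a\<^sup>2)) (at 0)"
    by (simp add: tilted_moment_0_origin numeral_2_eq_2)
  then have deriv: "((\<lambda>c. ln (tilted_moment 0 M c 0) - c * v) has_real_derivative
      expectation (\<lambda>a. a\<^sup>2) - 1 * v) (at 0)"
    by (intro DERIV_diff DERIV_cmult_right DERIV_ident)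
  moreover have "expectation (\<lambda>a. a\<^sup>2) - 1 * v \<noteq> 0"
    using assms by simp
  ultimately obtain c where "ln (tilted_moment 0 M c 0) - c * v < ln (tilted_moment 0 M 0 0) - 0 * v"
    using exists_less_of_nonzero_derivative by blast
  then show ?thesis
    using that by (simp add: tilted_moment_0_origin)
qed

end

lemma bounded_real_distribution_of_support:
  assumes "prob_space M" and "sets M = sets borel" and "bounded \<Lambda>" and "measure M \<Lambda> = 1"
  obtains R where "bounded_real_distribution M R"
proof -
  interpret prob_space M
    by fact
  obtain R where "\<forall>a\<in>\<Lambda>. \<bar>a\<bar> \<le> R"
    using assms(3) unfolding bounded_iff by auto
  moreover have "AE a in M. a \<in> \<Lambda>"
    by (rule AE_prob_1) (use assms(4) in simp)
  ultimately have "bounded_real_distribution M R"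
    by unfold_locales (auto simp: assms(2) elim!: eventually_mono)
  then show ?thesis ..
qed

theorem lemma6:
  fixes \<beta> :: real and p :: nat and \<Lambda> :: "real set" and \<mu> :: "real measure"
    and v :: real and \<Phi> :: "real \<Rightarrow> real \<Rightarrow> real \<Rightarrow> real"
  assumes p: "p \<ge> 2"
    and \<beta>: "\<beta> > 0"
    and \<Lambda>: "\<Lambda> \<in> sets borel" "bounded \<Lambda>"
    and \<mu>: "prob_space \<mu>" "sets \<mu> = sets borel" "measure \<mu> \<Lambda> = 1"
    and centered: "(\<integral>a. a \<partial>\<mu>) = 0"
    and v: "v \<in> {u\<^sup>2 | u. u \<in> \<Lambda>}"
    and \<Phi>: "\<And>lam. parisi_sol \<beta> p v (\<lambda>s. 1) \<mu> lam (\<Phi> lam)"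
  shows "(v \<noteq> (\<integral>a. a\<^sup>2 \<partial>\<mu>) \<longrightarrow>
           (INF lam. ereal (parisi_Q \<beta> p v (\<lambda>s. 1) lam (\<Phi> lam 0 0))) < 0) \<and>
         (v = (\<integral>a. a\<^sup>2 \<partial>\<mu>) \<longrightarrow>
           (INF lam. ereal (parisi_Q \<beta> p v (\<lambda>s. 1) lam (\<Phi> lam 0 0))) = 0 \<and>
           parisi_Q \<beta> p v (\<lambda>s. 1) (- \<beta>\<^sup>2 * real p * (\<integral>a. a\<^sup>2 \<partial>\<mu>) ^ (p - 1) / 2)
             (\<Phi> (- \<beta>\<^sup>2 * real p * (\<integral>a. a\<^sup>2 \<partial>\<mu>) ^ (p - 1) / 2) 0 0) = 0)"
proof -
  obtain R where "bounded_real_distribution \<mu> R"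
    using bounded_real_distribution_of_support[OF \<mu>(1,2) \<Lambda>(2) \<mu>(3)] .
  then interpret bounded_real_distribution \<mu> R .
  have "0 \<le> v"
    using v by auto
  define \<kappa> where "\<kappa> = \<beta>\<^sup>2 * real p * v ^ (p - 1) / 2"
  define g where "g c = ln (tilted_moment 0 \<mu> c 0) - c * v" for c
  have Q: "parisi_Q \<beta> p v (\<lambda>s. 1) lam (\<Phi> lam 0 0) = g (lam + \<kappa>)" for lam
    unfolding g_def \<kappa>_def by (rule parisi_Q_alpha_one_eq[OF p \<open>0 \<le> v\<close> \<Phi>])
  have INF_le: "(INF lam. ereal (parisi_Q \<beta> p v (\<lambda>s. 1) lam (\<Phi> lam 0 0))) \<le> g c" for c
    by (rule INF_lower2[of "c - \<kappa>"]) (simp_all add: Q)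
  show ?thesis
  proof (intro conjI impI)
    assume "v \<noteq> expectation (\<lambda>a. a\<^sup>2)"
    then obtain c where "g c < 0"
      unfolding g_def by (rule ln_tilted_moment_less_linear)
    then show "(INF lam. ereal (parisi_Q \<beta> p v (\<lambda>s. 1) lam (\<Phi> lam 0 0))) < 0"
      using INF_le[of c] by (simp add: order_le_less_trans)
  next
    assume v_eq: "v = expectation (\<lambda>a. a\<^sup>2)"
    have lam_star: "- \<beta>\<^sup>2 * real p * expectation (\<lambda>a. a\<^sup>2) ^ (p - 1) / 2 = - \<kappa>"
      unfolding \<kappa>_def v_eq by simp
    show "parisi_Q \<beta> p v (\<lambda>s. 1) (- \<beta>\<^sup>2 * real p * expectation (\<lambda>a. a\<^sup>2) ^ (p - 1) / 2)
        (\<Phi> (- \<beta>\<^sup>2 * real p * expectation (\<lambda>a. a\<^sup>2) ^ (p - 1) / 2) 0 0) = 0"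
      unfolding lam_star Q by (simp add: g_def tilted_moment_0_origin)
    have "0 \<le> g c" for c
      using mult_second_moment_le_ln_tilted_moment[of c] by (simp add: g_def v_eq)
    then show "(INF lam. ereal (parisi_Q \<beta> p v (\<lambda>s. 1) lam (\<Phi> lam 0 0))) = 0"
      using INF_le[of 0] by (intro antisym INF_greatest) (auto simp: Q g_def tilted_moment_0_origin zero_ereal_def)
  qed
qed

end
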